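(* Let $x_0\in E$. The $s$-inversion $I$ of $E$ with fixed point $x_0$ is as follows. (1) If $-\infty<s(l)$, $s(r)<\infty$ and $2s(x_0)\neq s(l)+s(r)$: $I$ is given by the formulas $I(x)=s^{-1}(s^2(x_0)/s(x))$ if $s^2(x_0)=s(l)s(r)$, and $I(x)=s^{-1}((s(x)+a)/(bs(x)-1))$ otherwise, with $a=\frac{(2s(l)s(r)-s(x_0)(s(l)+s(r)))s(x_0)}{s^2(x_0)-s(l)s(r)}$, $b=\frac{2s(x_0)-(s(l)+s(r))}{s^2(x_0)-s(l)s(r)}$. (2) If $-\infty<s(l)$ and $s(r)=+\infty$: $I(x)=s^{-1}\Big(s(l)+\dfrac{(s(x_0)-s(l))^2}{s(x)-s(l)}\Big)$. (3) If $s(l)=-\infty$ and $s(r)<+\infty$: $I(x)=s^{-1}\Big(s(r)-\dfrac{(s(r)-s(x_0))^2}{s(r)-s(x)}\Big)$. (4) If $s(l)=-\infty$ and $s(r)=+\infty$, or if $s$ is bounded and $2s(x_0)=s(l)+s(r)$: $I$ is the $s$-reflection in $x_0$, i.e. $I(x)=s^{-1}(2s(x_0)-s(x))$.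
   Context: Setting: $E=(l,r)$, $-\infty\le l<r\le\infty$; $X$ is a diffusion on $E$ solving $dX_t=\sigma(X_t)dW_t+b(X_t)dt$ with $\sigma\neq0$, $1/\sigma^2,b/\sigma^2\in L^1_{loc}(E)$, killed upon hitting $l$ or $r$. Its scale function is $s(x)=\int_c^x\exp(-2\int_c^z b/\sigma^2)\,dz$ (continuous, strictly increasing), $s^{-1}$ its inverse, $s(l),s(r)\in[-\infty,\infty]$ its limits at the endpoints. Let $\mathcal{MI}$ be the set of real Möbius involutions $\omega(y)=(ay+b)/(cy-a)$ with $a,b,c\in\mathbb{R}$, $a^2+bc>0$. Definition: for $x_0\in E$, a map $I:E\to E$ is the $s$-inversion with fixed point $x_0$ if (i) $I\circ I=\mathrm{id}_E$; (ii) $s\circ I\circ s^{-1}$ is (the restriction to $s(E)$ of) an element of $\mathcal{MI}$ or the reflection $y\mapsto 2s(x_0)-y$; (iii) $I(E)=E$; (iv) $I(x_0)=x_0$. If $s\circ I\circ s^{-1}(y)=2s(x_0)-y$, $I$ is the $s$-reflection in $x_0$. *)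

theory Defs
  imports "HOL-Analysis.Analysis"
begin

definition Eset :: "ereal \<Rightarrow> ereal \<Rightarrow> real set" where
  "Eset l r = {x. l < ereal x \<and> ereal x < r}"

definition scale_fun :: "(real \<Rightarrow> real) \<Rightarrow> (real \<Rightarrow> real) \<Rightarrow> real \<Rightarrow> real \<Rightarrow> real" where
  "scale_fun \<sigma> b c x =
     (LBINT z=ereal c..ereal x. exp (-2 * (LBINT u=ereal c..ereal z. b u / (\<sigma> u)^2)))"

definition left_end :: "ereal \<Rightarrow> real filter" where
  "left_end l = (if l = -\<infinity> then at_bot else at_right (real_of_ereal l))"

definition right_end :: "ereal \<Rightarrow> real filter" where
  "right_end r = (if r = \<infinity> then at_top else at_left (real_of_ereal r))"

text \<open>s-inversion of E with fixed point x0 (conditions (i)-(iv)); the Moebius involution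
  y \<mapsto> (a y + b)/(c y - a), a^2+bc>0, must be defined (no pole) on s(E).\<close>
definition s_inversion :: "(real \<Rightarrow> real) \<Rightarrow> real set \<Rightarrow> real \<Rightarrow> (real \<Rightarrow> real) \<Rightarrow> bool" where
  "s_inversion s E x0 I \<longleftrightarrow>
     (\<forall>x\<in>E. I (I x) = x) \<and>
     ((\<exists>a b c. a^2 + b * c > 0 \<and>
         (\<forall>y\<in>s ` E. c * y - a \<noteq> 0 \<and> s (I (inv_into E s y)) = (a * y + b) / (c * y - a)))
      \<or> (\<forall>y\<in>s ` E. s (I (inv_into E s y)) = 2 * s x0 - y)) \<and>
     I ` E = E \<and>
     I x0 = x0"

end

theory Submission
  imports Defs
begin

(* An s-inversion I of E = (l,r) is the same thing as the conjugate s^-1 \<circ> \<phi> \<circ> s of an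
   inversion \<phi> of the open interval J = s(E) = (s(l), s(r)): a self-map of J fixing S0 = s(x0)
   that is a real Moebius involution (without pole in J) or the reflection in S0.  So the theorem
   reduces to classifying these interval inversions, which is elementary real algebra:
   a Moebius involution with finite pole p is y \<mapsto> p + K/(y - p) with K > 0; it fixes S0 iff
   K = (S0 - p)^2, and it maps J into itself iff it swaps the endpoints of J (K = (L - p)(R - p)
   for a bounded J, p at the finite endpoint for a half-line, impossible for the whole line).
   These two equations determine p and K, giving cases (1)-(3); the reflection maps J into itself
   iff J is symmetric about S0, giving case (4). *)

text \<open>Every real Moebius involution with a finite pole is of the form y \<mapsto> p + K/(y - p):
  p is the pole and K > 0 the power of the involution.\<close>
definition mob :: "real \<Rightarrow> real \<Rightarrow> real \<Rightarrow> real" where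
  "mob p K y = p + K / (y - p)"

lemma mob_involutive:
  assumes "K > 0" "y \<noteq> p"
  shows "mob p K (mob p K y) = y"
  using assms by (auto simp: mob_def field_simps)

lemma mob_fixed_point:
  assumes "S \<noteq> p"
  shows "mob p K S = S \<longleftrightarrow> (S - p)^2 = K"
  using assms by (auto simp: mob_def field_simps power2_eq_square)

lemma moebius_as_mob:
  assumes "c \<noteq> 0" "c * y - a \<noteq> 0"
  shows "(a * y + b) / (c * y - a) = mob (a / c) ((a^2 + b * c) / c^2) y"
proof -
  have "y - a / c \<noteq> 0" using assms by (auto simp: field_simps)
  then show ?thesis using assms by (simp add: mob_def field_simps power2_eq_square)
qed

lemma mob_as_moebius:
  assumes "y \<noteq> p"
  shows "mob p K y = (p * y + (K - p^2)) / (1 * y - p)"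
  using assms by (simp add: mob_def field_simps power2_eq_square)

text \<open>The key rigidity fact: if u \<mapsto> K/u maps (a,b) into itself (with 0 \<le> a), then it swaps
  the endpoints, i.e. K = ab.  This is what pins down the pole and power of an inversion.\<close>
lemma reciprocal_maps_interval:
  fixes a b K :: real
  assumes "0 \<le> a" "a < b" "K > 0"
    and into: "\<And>u. a < u \<Longrightarrow> u < b \<Longrightarrow> a < K / u \<and> K / u < b"
  shows "0 < a" "K = a * b"
proof -
  have "K / b \<le> a"
  proof (rule dense_ge_bounded[OF \<open>a < b\<close>])
    fix u assume u: "a < u" "u < b"
    then have "K < b * u" using into[OF u] \<open>0 \<le> a\<close> by (simp add: field_simps)
    then show "K / b \<le> u" using u \<open>0 \<le> a\<close> by (simp add: field_simps)
  qed
  then have upper: "K \<le> a * b" using assms by (simp add: field_simps)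
  then show "0 < a" using assms by (cases "a = 0") auto
  have "b \<le> K / a"
  proof (rule dense_le_bounded[OF \<open>a < b\<close>])
    fix u assume u: "a < u" "u < b"
    then have "a * u < K" using into[OF u] \<open>0 < a\<close> by (simp add: field_simps)
    then show "u \<le> K / a" using \<open>0 < a\<close> by (simp add: field_simps)
  qed
  then have "a * b \<le> K" using \<open>0 < a\<close> by (simp add: field_simps)
  then show "K = a * b" using upper by simp
qed

lemma reciprocal_maps_halfline:
  fixes a K :: real
  assumes "0 \<le> a" "K > 0" and into: "\<And>u. a < u \<Longrightarrow> a < K / u"
  shows "a = 0"
proof (rule ccontr)
  assume "a \<noteq> 0"
  then have "0 < a" using assms by simp
  define u where "u = a + K / a"
  have "a < u" using \<open>0 < a\<close> \<open>K > 0\<close> by (simp add: u_def)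
  then have "a * u < K" using into[of u] \<open>0 < a\<close> by (simp add: field_simps)
  moreover have "K < a * u" using \<open>0 < a\<close> by (simp add: u_def field_simps power2_eq_square)
  ultimately show False by simp
qed

lemma mob_maps_interval_iff:
  fixes L R p K :: real
  assumes "L < R" "K > 0" "p \<notin> {L<..<R}"
  shows "(\<forall>y\<in>{L<..<R}. mob p K y \<in> {L<..<R}) \<longleftrightarrow> (p < L \<or> R < p) \<and> K = (L - p) * (R - p)"
proof
  assume into: "\<forall>y\<in>{L<..<R}. mob p K y \<in> {L<..<R}"
  consider "p \<le> L" | "R \<le> p" using assms(3) by fastforce
  then show "(p < L \<or> R < p) \<and> K = (L - p) * (R - p)"
  proof cases
    case 1
    have "L - p < K / u \<and> K / u < R - p" if "L - p < u" "u < R - p" for u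
      using into[rule_format, of "u + p"] that by (simp add: mob_def)
    from reciprocal_maps_interval[of "L - p" "R - p" K, OF _ _ \<open>K > 0\<close> this] 1 \<open>L < R\<close>
    show ?thesis by auto
  next
    case 2
    have "mob p K (p - u) = p - K / u" for u by (simp add: mob_def)
    then have "p - R < K / u \<and> K / u < p - L" if "p - R < u" "u < p - L" for u
      using into[rule_format, of "p - u"] that by auto
    from reciprocal_maps_interval[of "p - R" "p - L" K, OF _ _ \<open>K > 0\<close> this] 2 \<open>L < R\<close>
    show ?thesis by (auto simp: algebra_simps)
  qed
next
  assume "(p < L \<or> R < p) \<and> K = (L - p) * (R - p)"
  then have pole: "p < L \<or> R < p" and K: "K = (L - p) * (R - p)" by auto
  show "\<forall>y\<in>{L<..<R}. mob p K y \<in> {L<..<R}"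
  proof
    fix y assume y: "y \<in> {L<..<R}"
    have "y \<noteq> p" using y pole by auto
    then have "mob p K y - L = (L - p) * (R - y) / (y - p)" "R - mob p K y = (R - p) * (y - L) / (y - p)"
      by (simp_all add: mob_def K field_simps)
    moreover have "0 < (L - p) * (R - y) / (y - p)" "0 < (R - p) * (y - L) / (y - p)"
      using y pole by (auto simp: zero_less_divide_iff zero_less_mult_iff mult_less_0_iff)
    ultimately show "mob p K y \<in> {L<..<R}" by simp
  qed
qed

lemma mob_maps_right_halfline_iff:
  fixes L p K :: real
  assumes "K > 0" "p \<le> L"
  shows "(\<forall>y>L. L < mob p K y) \<longleftrightarrow> p = L"
proof
  assume into: "\<forall>y>L. L < mob p K y"
  have "L - p < K / u" if "L - p < u" for u
    using into[rule_format, of "u + p"] that by (simp add: mob_def)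
  from reciprocal_maps_halfline[OF _ \<open>K > 0\<close> this] \<open>p \<le> L\<close> show "p = L" by simp
qed (use \<open>K > 0\<close> in \<open>simp add: mob_def\<close>)

lemma mob_maps_left_halfline_iff:
  fixes R p K :: real
  assumes "K > 0" "R \<le> p"
  shows "(\<forall>y<R. mob p K y < R) \<longleftrightarrow> p = R"
proof
  assume into: "\<forall>y<R. mob p K y < R"
  have "mob p K (p - u) = p - K / u" for u by (simp add: mob_def)
  then have "p - R < K / u" if "p - R < u" for u
    using into[rule_format, of "p - u"] that by auto
  from reciprocal_maps_halfline[OF _ \<open>K > 0\<close> this] \<open>R \<le> p\<close> show "p = R" by simp
qed (use \<open>K > 0\<close> in \<open>auto simp: mob_def divide_pos_neg\<close>)

text \<open>Condition (ii) of an s-inversion, transported to the scale: on J the map is a real Moebius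
  involution without pole in J, or the reflection in S0.\<close>
definition moebius_or_reflection :: "real set \<Rightarrow> real \<Rightarrow> (real \<Rightarrow> real) \<Rightarrow> bool" where
  "moebius_or_reflection J S0 \<phi> \<longleftrightarrow>
     (\<exists>a b c. a^2 + b * c > 0 \<and> (\<forall>y\<in>J. c * y - a \<noteq> 0 \<and> \<phi> y = (a * y + b) / (c * y - a)))
     \<or> (\<forall>y\<in>J. \<phi> y = 2 * S0 - y)"

definition interval_inversion :: "real set \<Rightarrow> real \<Rightarrow> (real \<Rightarrow> real) \<Rightarrow> bool" where
  "interval_inversion J S0 \<phi> \<longleftrightarrow> (\<forall>y\<in>J. \<phi> y \<in> J) \<and> \<phi> S0 = S0 \<and> moebius_or_reflection J S0 \<phi>"

lemma moebius_or_reflection_cong: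
  assumes "\<forall>y\<in>J. \<phi> y = \<psi> y"
  shows "moebius_or_reflection J S0 \<phi> \<longleftrightarrow> moebius_or_reflection J S0 \<psi>"
  using assms unfolding moebius_or_reflection_def by auto

text \<open>Every interval inversion is either a normal-form involution with pole outside J and power
  (S0 - p)^2, or the reflection in S0 (a Moebius involution with c = 0 is a reflection, and the
  fixed point S0 identifies its centre).\<close>
lemma interval_inversion_normal_form:
  assumes inv: "interval_inversion J S0 \<phi>" and S0: "S0 \<in> J"
  shows "(\<exists>p K. K > 0 \<and> p \<notin> J \<and> (S0 - p)^2 = K \<and> (\<forall>y\<in>J. \<phi> y = mob p K y))
         \<or> (\<forall>y\<in>J. \<phi> y = 2 * S0 - y)"
proof -
  have fixed: "\<phi> S0 = S0" and form: "moebius_or_reflection J S0 \<phi>"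
    using inv by (auto simp: interval_inversion_def)
  from form consider
      (moebius) a b c where "a^2 + b * c > 0" "\<forall>y\<in>J. c * y - a \<noteq> 0 \<and> \<phi> y = (a * y + b) / (c * y - a)"
    | (reflection) "\<forall>y\<in>J. \<phi> y = 2 * S0 - y"
    unfolding moebius_or_reflection_def by blast
  then show ?thesis
  proof cases
    case (moebius a b c)
    show ?thesis
    proof (cases "c = 0")
      case True
      then have "a \<noteq> 0" using moebius(1) by auto
      then have "\<forall>y\<in>J. \<phi> y = - y - b / a" using moebius(2) True by (auto simp: field_simps)
      then have "\<forall>y\<in>J. \<phi> y = 2 * S0 - y" using fixed S0 by force
      then show ?thesis ..
    next
      case False
      define p K where "p = a / c" and "K = (a^2 + b * c) / c^2"
      have "K > 0" using moebius(1) False by (simp add: K_def)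
      have mob: "\<forall>y\<in>J. \<phi> y = mob p K y"
        using moebius(2) moebius_as_mob[OF False] by (simp add: p_def K_def)
      have "p \<notin> J"
      proof
        assume "p \<in> J"
        then have "c * p - a \<noteq> 0" using moebius(2) by blast
        then show False using False by (simp add: p_def)
      qed
      then have "(S0 - p)^2 = K"
        using mob_fixed_point[of S0 p K] mob fixed S0 by auto
      then show ?thesis using \<open>K > 0\<close> \<open>p \<notin> J\<close> mob by blast
    qed
  qed simp
qed

lemma interval_inversion_mobI:
  assumes "K > 0" "p \<notin> J" "S0 \<in> J" "(S0 - p)^2 = K"
    and into: "\<forall>y\<in>J. mob p K y \<in> J" and eq: "\<forall>y\<in>J. \<phi> y = mob p K y"
  shows "interval_inversion J S0 \<phi>"
proof -
  have "p^2 + (K - p^2) * 1 > 0" using \<open>K > 0\<close> by simp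
  moreover have "\<forall>y\<in>J. 1 * y - p \<noteq> 0 \<and> \<phi> y = (p * y + (K - p^2)) / (1 * y - p)"
  proof
    fix y assume "y \<in> J"
    then have "y \<noteq> p" using \<open>p \<notin> J\<close> by auto
    then show "1 * y - p \<noteq> 0 \<and> \<phi> y = (p * y + (K - p^2)) / (1 * y - p)"
      using eq \<open>y \<in> J\<close> mob_as_moebius by simp
  qed
  ultimately have "moebius_or_reflection J S0 \<phi>"
    unfolding moebius_or_reflection_def by blast
  moreover have "\<phi> S0 = S0"
    using eq mob_fixed_point[of S0 p K] assms(2-4) by auto
  ultimately show ?thesis using into eq by (simp add: interval_inversion_def)
qed

lemma interval_inversion_reflectionI:
  assumes "S0 \<in> J" and into: "\<forall>y\<in>J. 2 * S0 - y \<in> J" and eq: "\<forall>y\<in>J. \<phi> y = 2 * S0 - y"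
  shows "interval_inversion J S0 \<phi>"
  using assms by (simp add: interval_inversion_def moebius_or_reflection_def)

lemma interval_inversion_involutive:
  assumes inv: "interval_inversion J S0 \<phi>" and S0: "S0 \<in> J" and y: "y \<in> J"
  shows "\<phi> (\<phi> y) = y"
proof -
  have "\<phi> y \<in> J" using inv y by (simp add: interval_inversion_def)
  from interval_inversion_normal_form[OF inv S0] show ?thesis
  proof
    assume "\<exists>p K. K > 0 \<and> p \<notin> J \<and> (S0 - p)^2 = K \<and> (\<forall>y\<in>J. \<phi> y = mob p K y)"
    then obtain p K where "K > 0" "p \<notin> J" "\<forall>y\<in>J. \<phi> y = mob p K y" by blast
    moreover have "y \<noteq> p" using y \<open>p \<notin> J\<close> by auto
    ultimately show ?thesis using y \<open>\<phi> y \<in> J\<close> mob_involutive[of K y p] by simp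
  qed (use y \<open>\<phi> y \<in> J\<close> in simp)
qed

lemma reflection_maps_interval_iff:
  fixes L R S0 :: real
  assumes "L < R"
  shows "(\<forall>y\<in>{L<..<R}. 2 * S0 - y \<in> {L<..<R}) \<longleftrightarrow> 2 * S0 = L + R"
proof
  assume into: "\<forall>y\<in>{L<..<R}. 2 * S0 - y \<in> {L<..<R}"
  have "R \<le> 2 * S0 - L"
    by (rule dense_le_bounded[OF \<open>L < R\<close>]) (use into in force)
  moreover have "2 * S0 - R \<le> L"
    by (rule dense_ge_bounded[OF \<open>L < R\<close>]) (use into in force)
  ultimately show "2 * S0 = L + R" by simp
qed auto

lemma pole_equation:
  fixes L R S0 p K :: real
  assumes "L < R" "K > 0" "p \<notin> {L<..<R}" "(S0 - p)^2 = K"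
    and into: "\<forall>y\<in>{L<..<R}. mob p K y \<in> {L<..<R}"
  shows "p * (L + R - 2 * S0) = L * R - S0^2"
proof -
  have "K = (L - p) * (R - p)" using into mob_maps_interval_iff[OF assms(1-3)] by blast
  then show ?thesis using \<open>(S0 - p)^2 = K\<close> by (simp add: power2_eq_square algebra_simps)
qed

lemma asymmetric_pole:
  fixes L R S0 :: real
  assumes S0: "L < S0" "S0 < R" and asym: "2 * S0 \<noteq> L + R"
  defines "p0 \<equiv> (L * R - S0^2) / (L + R - 2 * S0)"
  shows "(S0 - p0)^2 = (L - p0) * (R - p0)" "(L - p0) * (R - p0) > 0" "p0 < L \<or> R < p0"
proof -
  have "p0 * (L + R - 2 * S0) = L * R - S0^2" using asym by (simp add: p0_def)
  then show sq: "(S0 - p0)^2 = (L - p0) * (R - p0)" by (simp add: power2_eq_square algebra_simps)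
  have "S0 \<noteq> p0"
  proof
    assume "S0 = p0"
    then have "(L - p0) * (R - p0) = 0" using sq by simp
    then show False using S0 \<open>S0 = p0\<close> by simp
  qed
  then show pos: "(L - p0) * (R - p0) > 0" using sq by (metis right_minus_eq zero_less_power2)
  then show "p0 < L \<or> R < p0" by (auto simp: zero_less_mult_iff)
qed

lemma inversion_symmetric_interval:
  fixes L R S0 :: real
  assumes S0: "L < S0" "S0 < R" and sym: "2 * S0 = L + R"
  shows "interval_inversion {L<..<R} S0 \<phi> \<longleftrightarrow> (\<forall>y\<in>{L<..<R}. \<phi> y = 2 * S0 - y)"
proof
  assume inv: "interval_inversion {L<..<R} S0 \<phi>"
  have "\<not> (K > 0 \<and> p \<notin> {L<..<R} \<and> (S0 - p)^2 = K \<and> (\<forall>y\<in>{L<..<R}. \<phi> y = mob p K y))" for p K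
  proof
    assume H: "K > 0 \<and> p \<notin> {L<..<R} \<and> (S0 - p)^2 = K \<and> (\<forall>y\<in>{L<..<R}. \<phi> y = mob p K y)"
    then have "\<forall>y\<in>{L<..<R}. mob p K y \<in> {L<..<R}" using inv by (simp add: interval_inversion_def)
    then have "L * R = S0^2" using pole_equation[of L R K p S0] H S0 sym by simp
    have "(R - L)^2 = (L + R)^2 - 4 * (L * R)" by (simp add: power2_eq_square algebra_simps)
    also have "\<dots> = (2 * S0)^2 - 4 * S0^2" using sym \<open>L * R = S0^2\<close> by simp
    also have "\<dots> = 0" by (simp add: power2_eq_square)
    finally show False using S0 by simp
  qed
  moreover have "S0 \<in> {L<..<R}" using S0 by simp
  ultimately show "\<forall>y\<in>{L<..<R}. \<phi> y = 2 * S0 - y"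
    using interval_inversion_normal_form[OF inv] by blast
next
  assume "\<forall>y\<in>{L<..<R}. \<phi> y = 2 * S0 - y"
  then show "interval_inversion {L<..<R} S0 \<phi>"
    using interval_inversion_reflectionI reflection_maps_interval_iff[of L R S0] S0 sym by simp
qed

lemma inversion_asymmetric_interval:
  fixes L R S0 :: real
  assumes S0: "L < S0" "S0 < R" and asym: "2 * S0 \<noteq> L + R"
  defines "p0 \<equiv> (L * R - S0^2) / (L + R - 2 * S0)"
  defines "K0 \<equiv> (L - p0) * (R - p0)"
  shows "interval_inversion {L<..<R} S0 \<phi> \<longleftrightarrow> (\<forall>y\<in>{L<..<R}. \<phi> y = mob p0 K0 y)"
proof
  assume inv: "interval_inversion {L<..<R} S0 \<phi>"
  then have into: "\<forall>y\<in>{L<..<R}. \<phi> y \<in> {L<..<R}" by (simp add: interval_inversion_def)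
  have "S0 \<in> {L<..<R}" using S0 by simp
  from interval_inversion_normal_form[OF inv this] show "\<forall>y\<in>{L<..<R}. \<phi> y = mob p0 K0 y"
  proof
    assume "\<exists>p K. K > 0 \<and> p \<notin> {L<..<R} \<and> (S0 - p)^2 = K \<and> (\<forall>y\<in>{L<..<R}. \<phi> y = mob p K y)"
    then obtain p K where pK: "K > 0" "p \<notin> {L<..<R}" "(S0 - p)^2 = K"
      and eq: "\<forall>y\<in>{L<..<R}. \<phi> y = mob p K y" by blast
    have "p * (L + R - 2 * S0) = L * R - S0^2"
      using pole_equation[OF _ pK] into eq S0 by simp
    then have "p = p0" using asym by (simp add: p0_def field_simps)
    moreover have "K = K0"
      using pK(3) asymmetric_pole(1)[OF S0 asym] \<open>p = p0\<close> by (simp add: K0_def p0_def)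
    ultimately show ?thesis using eq by simp
  next
    assume "\<forall>y\<in>{L<..<R}. \<phi> y = 2 * S0 - y"
    then have "2 * S0 = L + R" using into reflection_maps_interval_iff[of L R S0] S0 by simp
    with asym show ?thesis by simp
  qed
next
  assume eq: "\<forall>y\<in>{L<..<R}. \<phi> y = mob p0 K0 y"
  note pole = asymmetric_pole[OF S0 asym, folded p0_def, folded K0_def]
  have "p0 \<notin> {L<..<R}" using pole(3) by auto
  moreover have "\<forall>y\<in>{L<..<R}. mob p0 K0 y \<in> {L<..<R}"
    using mob_maps_interval_iff[of L R K0 p0] pole \<open>p0 \<notin> {L<..<R}\<close> S0 by (simp add: K0_def)
  ultimately show "interval_inversion {L<..<R} S0 \<phi>"
    using interval_inversion_mobI[OF pole(2)] pole(1) eq S0 by simp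
qed

lemma inversion_right_halfline:
  fixes L S0 :: real
  assumes S0: "L < S0"
  shows "interval_inversion {L<..} S0 \<phi> \<longleftrightarrow> (\<forall>y\<in>{L<..}. \<phi> y = mob L ((S0 - L)^2) y)"
proof
  assume inv: "interval_inversion {L<..} S0 \<phi>"
  then have into: "\<forall>y>L. L < \<phi> y" by (simp add: interval_inversion_def)
  have "S0 \<in> {L<..}" using S0 by simp
  from interval_inversion_normal_form[OF inv this] show "\<forall>y\<in>{L<..}. \<phi> y = mob L ((S0 - L)^2) y"
  proof
    assume "\<exists>p K. K > 0 \<and> p \<notin> {L<..} \<and> (S0 - p)^2 = K \<and> (\<forall>y\<in>{L<..}. \<phi> y = mob p K y)"
    then obtain p K where pK: "K > 0" "p \<notin> {L<..}" "(S0 - p)^2 = K"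
      and eq: "\<forall>y\<in>{L<..}. \<phi> y = mob p K y" by blast
    have "p \<le> L" using pK(2) by simp
    have "p = L" using mob_maps_right_halfline_iff[OF pK(1) \<open>p \<le> L\<close>] into eq by simp
    then show ?thesis using pK(3) eq by simp
  next
    assume "\<forall>y\<in>{L<..}. \<phi> y = 2 * S0 - y"
    then have "\<phi> (2 * S0 - L) = L" using S0 by simp
    then show ?thesis using into[rule_format, of "2 * S0 - L"] S0 by simp
  qed
next
  assume eq: "\<forall>y\<in>{L<..}. \<phi> y = mob L ((S0 - L)^2) y"
  have "\<forall>y>L. L < mob L ((S0 - L)^2) y" using mob_maps_right_halfline_iff[of "(S0 - L)^2" L L] S0 by simp
  then show "interval_inversion {L<..} S0 \<phi>"
    using interval_inversion_mobI[of "(S0 - L)^2" L "{L<..}" S0 \<phi>] eq S0 by simp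
qed

lemma inversion_left_halfline:
  fixes R S0 :: real
  assumes S0: "S0 < R"
  shows "interval_inversion {..<R} S0 \<phi> \<longleftrightarrow> (\<forall>y\<in>{..<R}. \<phi> y = mob R ((R - S0)^2) y)"
proof
  assume inv: "interval_inversion {..<R} S0 \<phi>"
  then have into: "\<forall>y<R. \<phi> y < R" by (simp add: interval_inversion_def)
  have "S0 \<in> {..<R}" using S0 by simp
  from interval_inversion_normal_form[OF inv this] show "\<forall>y\<in>{..<R}. \<phi> y = mob R ((R - S0)^2) y"
  proof
    assume "\<exists>p K. K > 0 \<and> p \<notin> {..<R} \<and> (S0 - p)^2 = K \<and> (\<forall>y\<in>{..<R}. \<phi> y = mob p K y)"
    then obtain p K where pK: "K > 0" "p \<notin> {..<R}" "(S0 - p)^2 = K"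
      and eq: "\<forall>y\<in>{..<R}. \<phi> y = mob p K y" by blast
    have "R \<le> p" using pK(2) by simp
    have "p = R" using mob_maps_left_halfline_iff[OF pK(1) \<open>R \<le> p\<close>] into eq by simp
    then show ?thesis using pK(3) eq by (simp add: power2_commute)
  next
    assume "\<forall>y\<in>{..<R}. \<phi> y = 2 * S0 - y"
    then have "\<phi> (2 * S0 - R) = R" using S0 by simp
    then show ?thesis using into[rule_format, of "2 * S0 - R"] S0 by simp
  qed
next
  assume eq: "\<forall>y\<in>{..<R}. \<phi> y = mob R ((R - S0)^2) y"
  have "\<forall>y<R. mob R ((R - S0)^2) y < R" using mob_maps_left_halfline_iff[of "(R - S0)^2" R R] S0 by simp
  then show "interval_inversion {..<R} S0 \<phi>"
    using interval_inversion_mobI[of "(R - S0)^2" R "{..<R}" S0 \<phi>] eq S0 by (simp add: power2_commute)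
qed

text \<open>Classification, case (4) for J = \<real>: no room for a pole, only the reflection.\<close>
lemma inversion_whole_line:
  "interval_inversion UNIV S0 \<phi> \<longleftrightarrow> (\<forall>y. \<phi> y = 2 * S0 - y)"
  using interval_inversion_normal_form[of UNIV S0 \<phi>] interval_inversion_reflectionI[of S0 UNIV \<phi>]
  by auto

text \<open>The explicit formula of case (1) of the theorem is the normal-form involution with the pole
  p0 (when S0^2 = LR the pole is 0).\<close>
lemma asymmetric_formula:
  fixes L R S0 y :: real
  assumes S0: "L < S0" "S0 < R" and asym: "2 * S0 \<noteq> L + R"
  defines "p0 \<equiv> (L * R - S0^2) / (L + R - 2 * S0)"
  defines "K0 \<equiv> (L - p0) * (R - p0)"
  assumes y: "y \<noteq> p0"
  shows "(if S0^2 = L * R then S0^2 / y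
          else (let A = ((2 * L * R - S0 * (L + R)) * S0) / (S0^2 - L * R);
                    B = (2 * S0 - (L + R)) / (S0^2 - L * R)
                in (y + A) / (B * y - 1))) = mob p0 K0 y"
proof -
  have sq: "(S0 - p0)^2 = K0" using asymmetric_pole(1)[OF S0 asym] by (simp add: p0_def K0_def)
  have d: "L + R - 2 * S0 \<noteq> 0" using asym by simp
  show ?thesis
  proof (cases "S0^2 = L * R")
    case True
    then have "p0 = 0" by (simp add: p0_def)
    then show ?thesis using True sq by (simp add: mob_def)
  next
    case False
    then have N: "L * R - S0^2 \<noteq> 0" by simp
    then have "p0 \<noteq> 0" using d by (simp add: p0_def)
    have B: "(2 * S0 - (L + R)) / (S0^2 - L * R) = 1 / p0"
      using N d by (simp add: p0_def field_simps)
    have "(K0 - p0^2) / p0 = S0^2 / p0 - 2 * S0"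
      using sq[symmetric] \<open>p0 \<noteq> 0\<close> by (simp add: power2_eq_square field_simps)
    also have "\<dots> = ((2 * L * R - S0 * (L + R)) * S0) / (S0^2 - L * R)"
      using N d by (simp add: p0_def field_simps power2_eq_square)
    finally have A: "((2 * L * R - S0 * (L + R)) * S0) / (S0^2 - L * R) = (K0 - p0^2) / p0" ..
    have "(y + (K0 - p0^2) / p0) / (1 / p0 * y - 1) = mob p0 K0 y"
      using \<open>p0 \<noteq> 0\<close> y by (simp add: mob_def field_simps power2_eq_square)
    then show ?thesis using False unfolding Let_def A B by simp
  qed
qed

definition inversion_formula :: "ereal \<Rightarrow> ereal \<Rightarrow> real \<Rightarrow> real \<Rightarrow> real" where
  "inversion_formula sl sr S0 y =
     (let L = real_of_ereal sl; R = real_of_ereal sr in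
      if sl \<noteq> -\<infinity> \<and> sr \<noteq> \<infinity> \<and> 2 * S0 \<noteq> L + R then
        (if S0^2 = L * R then S0^2 / y
         else (let A = ((2 * L * R - S0 * (L + R)) * S0) / (S0^2 - L * R);
                   B = (2 * S0 - (L + R)) / (S0^2 - L * R)
               in (y + A) / (B * y - 1)))
      else if sl \<noteq> -\<infinity> \<and> sr = \<infinity> then L + (S0 - L)^2 / (y - L)
      else if sl = -\<infinity> \<and> sr \<noteq> \<infinity> then R - (R - S0)^2 / (R - y)
      else 2 * S0 - y)"

lemma inversion_classification:
  assumes sl: "sl < ereal S0" and sr: "ereal S0 < sr"
  shows "interval_inversion (einterval sl sr) S0 \<phi> \<longleftrightarrow>
           (\<forall>y\<in>einterval sl sr. \<phi> y = inversion_formula sl sr S0 y)"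
proof (cases sl; cases sr)
  fix L R assume fin: "sl = ereal L" "sr = ereal R"
  then have S0: "L < S0" "S0 < R" using sl sr by auto
  show ?thesis
  proof (cases "2 * S0 = L + R")
    case True
    then show ?thesis using inversion_symmetric_interval[OF S0 True] fin
      by (simp add: inversion_formula_def)
  next
    case False
    define p0 where "p0 = (L * R - S0^2) / (L + R - 2 * S0)"
    have "p0 \<notin> {L<..<R}" using asymmetric_pole(3)[OF S0 False] by (auto simp: p0_def)
    then have "\<forall>y\<in>{L<..<R}. inversion_formula sl sr S0 y = mob p0 ((L - p0) * (R - p0)) y"
      using asymmetric_formula[OF S0 False] fin False
      by (auto simp: inversion_formula_def p0_def simp del: einterval_eq)
    then show ?thesis using inversion_asymmetric_interval[OF S0 False] fin
      by (simp add: p0_def)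
  qed
next
  fix L assume "sl = ereal L" "sr = \<infinity>"
  moreover have "L < S0" using sl \<open>sl = ereal L\<close> by simp
  ultimately show ?thesis using inversion_right_halfline[of L S0]
    by (simp add: inversion_formula_def mob_def)
next
  fix R assume "sl = -\<infinity>" "sr = ereal R"
  moreover have "S0 < R" using sr \<open>sr = ereal R\<close> by simp
  moreover have "mob R ((R - S0)^2) y = R - (R - S0)^2 / (R - y)" for y
    by (simp add: mob_def divide_minus_right[symmetric])
  ultimately show ?thesis using inversion_left_halfline[of S0 R]
    by (simp add: inversion_formula_def)
next
  assume "sl = -\<infinity>" "sr = \<infinity>"
  then show ?thesis using inversion_whole_line[of S0 \<phi>] by (simp add: inversion_formula_def)
qed (use sl sr in simp_all)

lemma Eset_eq_einterval: "Eset l r = einterval l r"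
  by (simp add: Eset_def einterval_def)

lemma einterval_Icc_subset:
  assumes "u \<in> einterval l r" "v \<in> einterval l r"
  shows "{u..v} \<subseteq> einterval l r"
proof
  fix x assume "x \<in> {u..v}"
  then have "ereal u \<le> ereal x" "ereal x \<le> ereal v" by auto
  with assms show "x \<in> einterval l r"
    unfolding einterval_iff using less_le_trans le_less_trans by blast
qed

lemma einterval_enclose:
  assumes x: "x \<in> einterval l r" and c: "c \<in> einterval l r"
  obtains d e where "d \<in> einterval l r" "e \<in> einterval l r" "d < x" "d < c" "x < e" "c < e"
proof -
  have "l < ereal (min x c)" "ereal (max x c) < r" using x c by (auto simp: einterval_iff min_def max_def)
  then obtain d e where d: "l < ereal d" "d < min x c" and e: "max x c < e" "ereal e < r"
    using einterval_nonempty[of l "ereal (min x c)"] einterval_nonempty[of "ereal (max x c)" r]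
    by (auto simp: einterval_iff)
  moreover have "ereal d < ereal x" "ereal x < ereal e" using d e by auto
  ultimately have "d \<in> einterval l r" "e \<in> einterval l r"
    using x unfolding einterval_iff by (metis less_trans)+
  then show ?thesis using that d e by auto
qed

lemma oriented_integral_has_derivative:
  fixes f :: "real \<Rightarrow> real"
  assumes f: "continuous_on (einterval l r) f"
    and c: "c \<in> einterval l r" and x: "x \<in> einterval l r"
  shows "((\<lambda>x. LBINT z=ereal c..ereal x. f z) has_real_derivative f x) (at x)"
proof -
  obtain d e where de: "d \<in> einterval l r" "e \<in> einterval l r" "d < x" "d < c" "x < e" "c < e"
    using einterval_enclose[OF x c] .
  have "continuous_on {d..e} f" using continuous_on_subset[OF f einterval_Icc_subset[OF de(1,2)]] .
  then have "((\<lambda>u. LBINT z=ereal c..ereal u. f z) has_vector_derivative f x) (at x within {d..e})"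
    using de by (intro interval_integral_FTC2) auto
  then have "((\<lambda>u. LBINT z=ereal c..ereal u. f z) has_vector_derivative f x) (at x)"
    using at_within_interior[of x "{d..e}"] de by auto
  then show ?thesis by (simp add: has_real_derivative_iff_has_vector_derivative)
qed

lemma oriented_integral_continuous:
  fixes f :: "real \<Rightarrow> real"
  assumes int: "\<forall>u\<in>einterval l r. \<forall>v\<in>einterval l r. set_integrable lborel {u..v} f"
    and c: "c \<in> einterval l r"
  shows "continuous_on (einterval l r) (\<lambda>x. LBINT z=ereal c..ereal x. f z)"
proof (rule continuous_at_imp_continuous_on, rule ballI)
  fix x assume x: "x \<in> einterval l r"
  obtain d e where de: "d \<in> einterval l r" "e \<in> einterval l r" "d < x" "d < c" "x < e" "c < e"
    using einterval_enclose[OF x c] .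
  have sub: "{d..e} \<subseteq> einterval l r" by (rule einterval_Icc_subset[OF de(1,2)])
  have split: "(LBINT z=ereal c..ereal y. f z) = (LBINT z=ereal c..ereal d. f z) + integral {d..y} f" if y: "y \<in> {d..e}" for y
  proof -
    define m where "m = max c y"
    have "d \<le> m" "m \<in> {d..e}" using y de by (auto simp: m_def)
    then have "set_integrable lborel {d..m} f" using int de sub by (simp add: subset_iff)
    then have "interval_lebesgue_integrable lborel (ereal d) (ereal m) f"
      using \<open>d \<le> m\<close> set_integrable_subset[of lborel "{d..m}" f "{d<..<m}"]
      by (simp add: interval_lebesgue_integrable_def subset_iff)
    moreover have "min (ereal c) (min (ereal d) (ereal y)) = ereal d"
      "max (ereal c) (max (ereal d) (ereal y)) = ereal m" using y de by (auto simp: m_def)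
    ultimately have "(LBINT z=ereal c..ereal d. f z) + (LBINT z=ereal d..ereal y. f z) = (LBINT z=ereal c..ereal y. f z)"
      by (intro interval_integral_sum) simp
    moreover have "(LBINT z=ereal d..ereal y. f z) = integral {d..y} f"
      using y int de sub by (intro interval_integral_eq_integral) (auto simp: subset_iff)
    ultimately show ?thesis by simp
  qed
  have "f integrable_on {d..e}" using int de set_borel_integral_eq_integral(1) by blast
  then have "continuous_on {d..e} (\<lambda>y. (LBINT z=ereal c..ereal d. f z) + integral {d..y} f)"
    by (intro continuous_intros indefinite_integral_continuous_1)
  from continuous_on_eq[OF this split[symmetric]]
  have "continuous_on {d..e} (\<lambda>y. LBINT z=ereal c..ereal y. f z)" .
  then show "isCont (\<lambda>y. LBINT z=ereal c..ereal y. f z) x"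
    using continuous_on_interior[of "{d..e}"] de by auto
qed

text \<open>The scale function is continuous and strictly increasing: its derivative is the
  positive continuous function exp(-2 \<integral> b/\<sigma>^2).\<close>
lemma scale_fun_strict_mono_continuous:
  assumes c: "c \<in> einterval l r"
    and loc: "\<forall>u\<in>einterval l r. \<forall>v\<in>einterval l r. set_integrable lborel {u..v} (\<lambda>x. b x / (\<sigma> x)^2)"
  shows "strict_mono_on (einterval l r) (scale_fun \<sigma> b c)"
    and "continuous_on (einterval l r) (scale_fun \<sigma> b c)"
proof -
  define h where "h z = exp (-2 * (LBINT u=ereal c..ereal z. b u / (\<sigma> u)^2))" for z
  have "continuous_on (einterval l r) h"
    unfolding h_def by (intro continuous_intros oriented_integral_continuous[OF loc c])
  moreover have "scale_fun \<sigma> b c = (\<lambda>x. LBINT z=ereal c..ereal x. h z)"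
    by (simp add: fun_eq_iff scale_fun_def h_def)
  ultimately have deriv: "(scale_fun \<sigma> b c has_real_derivative h x) (at x)" if "x \<in> einterval l r" for x
    using oriented_integral_has_derivative[OF _ c that] by simp
  show "strict_mono_on (einterval l r) (scale_fun \<sigma> b c)"
  proof (rule strict_mono_onI)
    fix u v assume uv: "u \<in> einterval l r" "v \<in> einterval l r" "u < v"
    show "scale_fun \<sigma> b c u < scale_fun \<sigma> b c v"
      by (rule DERIV_pos_imp_increasing[OF uv(3)])
         (use deriv einterval_Icc_subset[OF uv(1,2)] in \<open>force simp: h_def\<close>)
  qed
  show "continuous_on (einterval l r) (scale_fun \<sigma> b c)"
    using deriv DERIV_isCont continuous_at_imp_continuous_on by blast
qed

lemma left_end_eventually:
  assumes x1: "x1 \<in> einterval l r"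
  shows "eventually (\<lambda>x. x \<in> einterval l r \<and> x \<le> x1) (left_end l)"
proof -
  have below: "x \<in> einterval l r" if "l < ereal x" "x \<le> x1" for x
    using that x1 le_less_trans[of "ereal x" "ereal x1" r] by (simp add: einterval_iff)
  show ?thesis
  proof (cases l)
    case (real L)
    then have "L < x1" using x1 by (simp add: einterval_iff)
    then show ?thesis using real below
      by (auto simp: left_end_def eventually_at_right_field intro!: exI[of _ x1])
  next
    case MInf
    then show ?thesis using below by (auto simp: left_end_def eventually_at_bot_linorder)
  qed (use x1 in \<open>simp add: einterval_iff\<close>)
qed

lemma right_end_eventually:
  assumes x1: "x1 \<in> einterval l r"
  shows "eventually (\<lambda>x. x \<in> einterval l r \<and> x1 \<le> x) (right_end r)"
proof -
  have above: "x \<in> einterval l r" if "ereal x < r" "x1 \<le> x" for x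
    using that x1 less_le_trans[of l "ereal x1" "ereal x"] by (simp add: einterval_iff)
  show ?thesis
  proof (cases r)
    case (real R)
    then have "x1 < R" using x1 by (simp add: einterval_iff)
    then show ?thesis using real above
      by (auto simp: right_end_def eventually_at_left_field intro!: exI[of _ x1])
  next
    case PInf
    then show ?thesis using above by (auto simp: right_end_def eventually_at_top_linorder)
  qed (use x1 in \<open>simp add: einterval_iff\<close>)
qed

lemma left_end_limit:
  fixes s :: "real \<Rightarrow> real"
  assumes mono: "strict_mono_on (einterval l r) s" and c: "c \<in> einterval l r"
  shows "Lim (left_end l) (\<lambda>x. ereal (s x)) = (INF x\<in>einterval l r. ereal (s x))"
proof (rule tendsto_Lim)
  show "\<not> trivial_limit (left_end l)" by (simp add: left_end_def)
  show "((\<lambda>x. ereal (s x)) \<longlongrightarrow> (INF x\<in>einterval l r. ereal (s x))) (left_end l)"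
  proof (rule order_tendstoI)
    fix a assume a: "a < (INF x\<in>einterval l r. ereal (s x))"
    show "eventually (\<lambda>x. a < ereal (s x)) (left_end l)"
      using left_end_eventually[OF c]
      by eventually_elim (use a in \<open>auto intro: less_le_trans INF_lower\<close>)
  next
    fix a assume "(INF x\<in>einterval l r. ereal (s x)) < a"
    then obtain x1 where x1: "x1 \<in> einterval l r" "ereal (s x1) < a" by (auto simp: Inf_less_iff)
    show "eventually (\<lambda>x. ereal (s x) < a) (left_end l)"
      using left_end_eventually[OF x1(1)]
    proof eventually_elim
      case (elim x)
      then have "s x \<le> s x1" using mono x1(1) by (metis order_le_less strict_mono_onD)
      then show ?case using x1(2) by (metis ereal_less_eq(3) order_le_less_trans)
    qed
  qed
qed

lemma right_end_limit:
  fixes s :: "real \<Rightarrow> real"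
  assumes mono: "strict_mono_on (einterval l r) s" and c: "c \<in> einterval l r"
  shows "Lim (right_end r) (\<lambda>x. ereal (s x)) = (SUP x\<in>einterval l r. ereal (s x))"
proof (rule tendsto_Lim)
  show "\<not> trivial_limit (right_end r)" by (simp add: right_end_def)
  show "((\<lambda>x. ereal (s x)) \<longlongrightarrow> (SUP x\<in>einterval l r. ereal (s x))) (right_end r)"
  proof (rule order_tendstoI)
    fix a assume "a < (SUP x\<in>einterval l r. ereal (s x))"
    then obtain x1 where x1: "x1 \<in> einterval l r" "a < ereal (s x1)" by (auto simp: less_Sup_iff)
    show "eventually (\<lambda>x. a < ereal (s x)) (right_end r)"
      using right_end_eventually[OF x1(1)]
    proof eventually_elim
      case (elim x)
      then have "s x1 \<le> s x" using mono x1(1) by (metis order_le_less strict_mono_onD)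
      then show ?case using x1(2) by (metis ereal_less_eq(3) order_less_le_trans)
    qed
  next
    fix a assume a: "(SUP x\<in>einterval l r. ereal (s x)) < a"
    show "eventually (\<lambda>x. ereal (s x) < a) (right_end r)"
      using right_end_eventually[OF c]
      by eventually_elim (use a in \<open>auto intro: le_less_trans SUP_upper\<close>)
  qed
qed

lemma strict_mono_continuous_image:
  fixes s :: "real \<Rightarrow> real"
  assumes mono: "strict_mono_on (einterval l r) s" and cont: "continuous_on (einterval l r) s"
  shows "s ` einterval l r =
           einterval (INF x\<in>einterval l r. ereal (s x)) (SUP x\<in>einterval l r. ereal (s x))"
    (is "_ = einterval ?inf ?sup")
proof (intro equalityI subsetI)
  fix y assume "y \<in> s ` einterval l r"
  then obtain x where x: "x \<in> einterval l r" "y = s x" by auto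
  obtain a b where ab: "a \<in> einterval l r" "b \<in> einterval l r" "a < x" "x < b"
    using einterval_enclose[OF x(1) x(1)] by blast
  have "?inf \<le> ereal (s a)" using ab by (auto intro: INF_lower)
  also have "ereal (s a) < ereal y" using mono ab x by (simp add: strict_mono_onD)
  finally have lower: "?inf < ereal y" .
  have "ereal y < ereal (s b)" using mono ab x by (simp add: strict_mono_onD)
  also have "ereal (s b) \<le> ?sup" using ab by (auto intro: SUP_upper)
  finally show "y \<in> einterval ?inf ?sup" using lower by (simp add: einterval_iff)
next
  fix y assume "y \<in> einterval ?inf ?sup"
  then have "?inf < ereal y" "ereal y < ?sup" by (auto simp: einterval_iff)
  then obtain x1 x2 where x1: "x1 \<in> einterval l r" "s x1 < y" and x2: "x2 \<in> einterval l r" "y < s x2"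
    by (auto simp: Inf_less_iff less_Sup_iff)
  have "x1 \<le> x2"
  proof (rule ccontr)
    assume "\<not> x1 \<le> x2"
    then have "s x2 < s x1" using mono x1(1) x2(1) by (simp add: strict_mono_onD)
    then show False using x1(2) x2(2) by simp
  qed
  moreover have "continuous_on {x1..x2} s"
    using continuous_on_subset[OF cont einterval_Icc_subset[OF x1(1) x2(1)]] .
  ultimately obtain x where "x \<in> {x1..x2}" "s x = y"
    using IVT'[of s x1 y x2] x1 x2 by auto
  then show "y \<in> s ` einterval l r" using einterval_Icc_subset[OF x1(1) x2(1)] by force
qed

lemma s_inversion_transfer:
  fixes s \<psi> I :: "real \<Rightarrow> real"
  assumes inj: "inj_on s E" and img: "s ` E = J" and x0: "x0 \<in> E"
    and classify: "\<And>\<phi>. interval_inversion J (s x0) \<phi> \<longleftrightarrow> (\<forall>y\<in>J. \<phi> y = \<psi> y)"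
  shows "s_inversion s E x0 I \<longleftrightarrow> (\<forall>x\<in>E. I x = inv_into E s (\<psi> (s x)))"
proof -
  define \<phi> where "\<phi> y = s (I (inv_into E s y))" for y
  have s_inv: "inv_into E s (s x) = x" if "x \<in> E" for x using inj that by simp
  have inv_s: "inv_into E s y \<in> E" "s (inv_into E s y) = y" if "y \<in> J" for y
    using that img by (auto simp: inv_into_into f_inv_into_f)
  have sJ: "s x \<in> J" if "x \<in> E" for x using img that by blast
  have S0: "s x0 \<in> J" using sJ[OF x0] .
  have \<psi>: "interval_inversion J (s x0) \<psi>" using classify by simp
  then have \<psi>_into: "\<psi> y \<in> J" and \<psi>_invol: "\<psi> (\<psi> y) = y" if "y \<in> J" for y
    using that interval_inversion_involutive[OF \<psi> S0] by (auto simp: interval_inversion_def)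
  have unfold: "s_inversion s E x0 I \<longleftrightarrow>
      (\<forall>x\<in>E. I (I x) = x) \<and> moebius_or_reflection J (s x0) \<phi> \<and> I ` E = E \<and> I x0 = x0"
    unfolding s_inversion_def moebius_or_reflection_def \<phi>_def img ..
  show ?thesis
  proof
    assume "s_inversion s E x0 I"
    then have form: "moebius_or_reflection J (s x0) \<phi>" and onto: "I ` E = E" and fixed: "I x0 = x0"
      using unfold by auto
    have "\<forall>y\<in>J. \<phi> y \<in> J"
    proof
      fix y assume "y \<in> J"
      then have "I (inv_into E s y) \<in> E" using inv_s(1) onto by blast
      then show "\<phi> y \<in> J" using sJ by (simp add: \<phi>_def)
    qed
    moreover have "\<phi> (s x0) = s x0" using fixed s_inv[OF x0] by (simp add: \<phi>_def)
    ultimately have "interval_inversion J (s x0) \<phi>" using form by (simp add: interval_inversion_def)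
    then have eq: "\<forall>y\<in>J. \<phi> y = \<psi> y" using classify[of \<phi>] by simp
    show "\<forall>x\<in>E. I x = inv_into E s (\<psi> (s x))"
    proof
      fix x assume x: "x \<in> E"
      then have "I x \<in> E" using onto by blast
      then have "I x = inv_into E s (s (I x))" using s_inv by simp
      also have "s (I x) = \<phi> (s x)" using s_inv[OF x] by (simp add: \<phi>_def)
      also have "\<dots> = \<psi> (s x)" using eq sJ[OF x] by blast
      finally show "I x = inv_into E s (\<psi> (s x))" .
    qed
  next
    assume I: "\<forall>x\<in>E. I x = inv_into E s (\<psi> (s x))"
    have IE: "I x \<in> E" and sI: "s (I x) = \<psi> (s x)" if "x \<in> E" for x
      using I inv_s \<psi>_into[OF sJ[OF that]] that by auto
    have invol: "I (I x) = x" if x: "x \<in> E" for x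
    proof -
      have "I (I x) = inv_into E s (\<psi> (s (I x)))" using I IE[OF x] by blast
      also have "\<dots> = inv_into E s (s x)" using sI[OF x] \<psi>_invol[OF sJ[OF x]] by simp
      finally show ?thesis using s_inv[OF x] by simp
    qed
    have "\<forall>y\<in>J. \<phi> y = \<psi> y" using sI inv_s by (simp add: \<phi>_def)
    then have "moebius_or_reflection J (s x0) \<phi>"
      using \<psi> moebius_or_reflection_cong[of J \<phi> \<psi> "s x0"] by (simp add: interval_inversion_def)
    moreover have "I ` E = E"
    proof
      show "I ` E \<subseteq> E" using IE by blast
      show "E \<subseteq> I ` E" using IE invol by (metis image_eqI subsetI)
    qed
    moreover have "I x0 = x0" using I x0 \<psi> s_inv by (simp add: interval_inversion_def)
    ultimately show "s_inversion s E x0 I" using unfold invol by blast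
  qed
qed

theorem proposition3:
  fixes l r :: ereal and \<sigma> b :: "real \<Rightarrow> real" and c x0 :: real and I :: "real \<Rightarrow> real"
  assumes lr: "l < r"
    and c: "c \<in> Eset l r"
    and x0: "x0 \<in> Eset l r"
    and sigma_nz: "\<forall>x\<in>Eset l r. \<sigma> x \<noteq> 0"
    and loc1: "\<forall>u\<in>Eset l r. \<forall>v\<in>Eset l r. set_integrable lborel {u..v} (\<lambda>x. 1 / (\<sigma> x)^2)"
    and loc2: "\<forall>u\<in>Eset l r. \<forall>v\<in>Eset l r. set_integrable lborel {u..v} (\<lambda>x. b x / (\<sigma> x)^2)"
  defines "E \<equiv> Eset l r"
    and "s \<equiv> scale_fun \<sigma> b c"
    and "sl \<equiv> Lim (left_end l) (\<lambda>x. ereal (scale_fun \<sigma> b c x))"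
    and "sr \<equiv> Lim (right_end r) (\<lambda>x. ereal (scale_fun \<sigma> b c x))"
  shows "s_inversion s E x0 I \<longleftrightarrow>
    (\<forall>x\<in>E. I x =
      (let L = real_of_ereal sl; R = real_of_ereal sr; S0 = s x0; sinv = inv_into E s in
       if sl \<noteq> -\<infinity> \<and> sr \<noteq> \<infinity> \<and> 2 * S0 \<noteq> L + R then
         (if S0^2 = L * R then sinv (S0^2 / s x)
          else (let A = ((2 * L * R - S0 * (L + R)) * S0) / (S0^2 - L * R);
                    B = (2 * S0 - (L + R)) / (S0^2 - L * R)
                in sinv ((s x + A) / (B * s x - 1))))
       else if sl \<noteq> -\<infinity> \<and> sr = \<infinity> then sinv (L + (S0 - L)^2 / (s x - L))
       else if sl = -\<infinity> \<and> sr \<noteq> \<infinity> then sinv (R - (R - S0)^2 / (R - s x))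
       else sinv (2 * S0 - s x)))"
proof -
  have E: "E = einterval l r" by (simp add: E_def Eset_eq_einterval)
  note c' = c[unfolded Eset_eq_einterval] and loc2' = loc2[unfolded Eset_eq_einterval]
  have mono: "strict_mono_on E s" and cont: "continuous_on E s"
    using scale_fun_strict_mono_continuous[OF c' loc2'] by (simp_all add: E s_def)
  have "sl = (INF x\<in>E. ereal (s x))" "sr = (SUP x\<in>E. ereal (s x))"
    using left_end_limit[OF _ c'] right_end_limit[OF _ c'] mono by (simp_all add: sl_def sr_def E s_def)
  then have img: "s ` E = einterval sl sr"
    using strict_mono_continuous_image[of l r s] mono cont by (simp add: E)
  have x0E: "x0 \<in> E" using x0 by (simp add: E_def)
  then have "sl < ereal (s x0)" "ereal (s x0) < sr" using img by (auto simp: einterval_iff)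
  then have "s_inversion s E x0 I \<longleftrightarrow>
      (\<forall>x\<in>E. I x = inv_into E s (inversion_formula sl sr (s x0) (s x)))"
    using s_inversion_transfer[OF strict_mono_on_imp_inj_on[OF mono] img x0E]
      inversion_classification by blast
  then show ?thesis by (simp add: inversion_formula_def Let_def)
qed

end
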